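(* Let $\rho>0$, $y\in\mathbb{R}^n$, and let $P_y\in\mathbb{R}^{n\times n}$ be any permutation matrix such that $\tilde y=P_y y$ satisfies $\tilde y_1\ge\tilde y_2\ge\cdots\ge\tilde y_n$. Then \[ S_\rho(y)=P_y^T\,\Pi_{\mathcal D}(P_y y-\rho w), \] where $w_k=n-2k+1$, $k=1,\dots,n$.
   Context: For $\rho>0$ and $y\in\mathbb{R}^n$, $S_\rho(y):=\operatorname{argmin}_{x\in\mathbb{R}^n}\big\{\tfrac12\|x-y\|^2+\rho\sum_{1\le i<j\le n}|x_i-x_j|\big\}$. $\mathcal D:=\{x\in\mathbb{R}^n : x_1\ge x_2\ge\cdots\ge x_n\}$ and $\Pi_{\mathcal D}$ is the Euclidean projection onto $\mathcal D$. *)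

theory Defs
  imports Complex_Main
begin

text \<open>Vectors in R^n are represented as functions nat => real that vanish at indices >= n;
  index k (0-based) corresponds to coordinate k+1 of the paper.\<close>

definition vecs :: "nat \<Rightarrow> (nat \<Rightarrow> real) set" where
  "vecs n = {x. \<forall>i\<ge>n. x i = 0}"

definition mv :: "nat \<Rightarrow> (nat \<Rightarrow> nat \<Rightarrow> real) \<Rightarrow> (nat \<Rightarrow> real) \<Rightarrow> nat \<Rightarrow> real" where
  "mv n P y = (\<lambda>i. if i < n then (\<Sum>j<n. P i j * y j) else 0)"

definition transp_mat :: "(nat \<Rightarrow> nat \<Rightarrow> real) \<Rightarrow> nat \<Rightarrow> nat \<Rightarrow> real" where
  "transp_mat P = (\<lambda>i j. P j i)"

definition is_perm_matrix :: "nat \<Rightarrow> (nat \<Rightarrow> nat \<Rightarrow> real) \<Rightarrow> bool" where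
  "is_perm_matrix n P \<longleftrightarrow>
     (\<forall>i<n. \<forall>j<n. P i j = 0 \<or> P i j = 1) \<and>
     (\<forall>i<n. \<exists>!j. j < n \<and> P i j = 1) \<and>
     (\<forall>j<n. \<exists>!i. i < n \<and> P i j = 1)"

definition Dcone :: "nat \<Rightarrow> (nat \<Rightarrow> real) set" where
  "Dcone n = {x \<in> vecs n. \<forall>i j. i \<le> j \<longrightarrow> j < n \<longrightarrow> x j \<le> x i}"

definition sqdist :: "nat \<Rightarrow> (nat \<Rightarrow> real) \<Rightarrow> (nat \<Rightarrow> real) \<Rightarrow> real" where
  "sqdist n x y = (\<Sum>i<n. (x i - y i)^2)"

definition projD :: "nat \<Rightarrow> (nat \<Rightarrow> real) \<Rightarrow> nat \<Rightarrow> real" where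
  "projD n z = (THE p. p \<in> Dcone n \<and> (\<forall>u\<in>Dcone n. sqdist n p z \<le> sqdist n u z))"

definition flobj :: "nat \<Rightarrow> real \<Rightarrow> (nat \<Rightarrow> real) \<Rightarrow> (nat \<Rightarrow> real) \<Rightarrow> real" where
  "flobj n \<rho> y x = 1/2 * sqdist n x y + \<rho> * (\<Sum>i<n. \<Sum>j\<in>{i<..<n}. \<bar>x i - x j\<bar>)"

definition S_set :: "nat \<Rightarrow> real \<Rightarrow> (nat \<Rightarrow> real) \<Rightarrow> (nat \<Rightarrow> real) set" where
  "S_set n \<rho> y = {x \<in> vecs n. \<forall>u\<in>vecs n. flobj n \<rho> y x \<le> flobj n \<rho> y u}"

text \<open>w_k = n - 2k + 1 for k = 1..n; here with 0-based index k, i.e. w k = n - 2(k+1) + 1.\<close>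
definition wvec :: "nat \<Rightarrow> nat \<Rightarrow> real" where
  "wvec n = (\<lambda>k. if k < n then real n - 2 * real (k + 1) + 1 else 0)"

end

theory Submission
  imports Defs "HOL-Analysis.Analysis"
begin

text \<open>The objective is invariant under simultaneous permutation of \<open>x\<close> and \<open>y\<close>, so one may
  assume \<open>y\<close> sorted decreasingly. Then rearranging any \<open>x\<close> into decreasing order keeps the
  penalty and does not increase \<open>\<parallel>x - y\<parallel>\<close>, so minimisers may be sought in \<open>\<D>\<close>. There the penalty
  equals \<open>\<langle>w, x\<rangle>\<close>, and completing the square makes the objective
  \<open>\<parallel>x - (y - \<rho> w)\<parallel>\<^sup>2/2\<close> plus a constant, minimised over \<open>\<D>\<close> by the projection.
  Strict convexity gives uniqueness.\<close>

definition pairwise_abs_diff :: "nat \<Rightarrow> (nat \<Rightarrow> real) \<Rightarrow> real" where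
  "pairwise_abs_diff n x = (\<Sum>i<n. \<Sum>j\<in>{i<..<n}. \<bar>x i - x j\<bar>)"

lemma flobj_eq: "flobj n \<rho> y x = 1/2 * sqdist n x y + \<rho> * pairwise_abs_diff n x"
  by (simp add: flobj_def pairwise_abs_diff_def)

lemma sum_upper_triangle_swap:
  "(\<Sum>i<(n::nat). \<Sum>j\<in>{i<..<n}. g i j) = (\<Sum>j<n. \<Sum>i<j. g i j :: 'a::comm_monoid_add)"
proof (induction n)
  case 0
  then show ?case by simp
next
  case (Suc n)
  have "{i<..<Suc n} = insert n {i<..<n}" if "i < n" for i
    using that by auto
  moreover have "{n<..<Suc n} = {}"
    by auto
  ultimately have "(\<Sum>i<Suc n. \<Sum>j\<in>{i<..<Suc n}. g i j) = (\<Sum>i<n. g i n + (\<Sum>j\<in>{i<..<n}. g i j))"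
    by simp
  also have "\<dots> = (\<Sum>j<Suc n. \<Sum>i<j. g i j)"
    using Suc by (simp add: sum.distrib add.commute)
  finally show ?case .
qed

lemma sum_lessThan_split:
  fixes f :: "nat \<Rightarrow> 'a::comm_monoid_add"
  assumes "i < n"
  shows "sum f {..<n} = sum f {..<i} + f i + sum f {i<..<n}"
proof -
  have "{..<n} = {..<i} \<union> insert i {i<..<n}"
    using assms by auto
  moreover have "sum f ({..<i} \<union> insert i {i<..<n}) = sum f {..<i} + (f i + sum f {i<..<n})"
    by (subst sum.union_disjoint) auto
  ultimately show ?thesis
    by (simp add: add.assoc)
qed

lemma pairwise_abs_diff_full_sum:
  "2 * pairwise_abs_diff n x = (\<Sum>i<n. \<Sum>j<n. \<bar>x i - x j\<bar>)"
proof -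
  have "(\<Sum>i<n. \<Sum>j<n. \<bar>x i - x j\<bar>)
        = (\<Sum>i<n. \<Sum>j<i. \<bar>x i - x j\<bar>) + (\<Sum>i<n. \<Sum>j\<in>{i<..<n}. \<bar>x i - x j\<bar>)"
    by (simp add: sum_lessThan_split[where f = "\<lambda>j. \<bar>_ - x j\<bar>"] sum.distrib)
  also have "(\<Sum>i<n. \<Sum>j<i. \<bar>x i - x j\<bar>) = pairwise_abs_diff n x"
    unfolding pairwise_abs_diff_def sum_upper_triangle_swap by (simp add: abs_minus_commute)
  finally show ?thesis
    by (simp add: pairwise_abs_diff_def)
qed

lemma pairwise_abs_diff_permute:
  assumes "\<sigma> permutes {..<n}"
  shows "pairwise_abs_diff n (x \<circ> \<sigma>) = pairwise_abs_diff n x"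
proof -
  have "(\<Sum>i<n. \<Sum>j<n. \<bar>x (\<sigma> i) - x (\<sigma> j)\<bar>) = (\<Sum>i<n. \<Sum>j<n. \<bar>x i - x j\<bar>)"
    using sum.permute[OF assms, of "\<lambda>j. \<bar>x _ - x j\<bar>"]
      sum.permute[OF assms, of "\<lambda>i. \<Sum>j<n. \<bar>x i - x j\<bar>"]
    by (simp add: comp_def)
  then show ?thesis
    using pairwise_abs_diff_full_sum[of n x] pairwise_abs_diff_full_sum[of n "x \<circ> \<sigma>"] by simp
qed

lemma pairwise_abs_diff_antitone:
  assumes "\<forall>i j. i \<le> j \<longrightarrow> j < n \<longrightarrow> x j \<le> x i"
  shows "pairwise_abs_diff n x = (\<Sum>k<n. wvec n k * x k)"
proof -
  have "pairwise_abs_diff n x = (\<Sum>i<n. \<Sum>j\<in>{i<..<n}. x i) - (\<Sum>i<n. \<Sum>j\<in>{i<..<n}. x j)"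
    unfolding pairwise_abs_diff_def sum_subtractf[symmetric] using assms
    by (intro sum.cong refl) auto
  also have "(\<Sum>i<n. \<Sum>j\<in>{i<..<n}. x j) = (\<Sum>j<n. \<Sum>i<j. x j)"
    by (rule sum_upper_triangle_swap)
  also have "(\<Sum>i<n. \<Sum>j\<in>{i<..<n}. x i) - (\<Sum>j<n. \<Sum>i<j. x j)
             = (\<Sum>k<n. (real (n - 1 - k) - real k) * x k)"
    by (simp add: sum_subtractf[symmetric] algebra_simps)
  also have "\<dots> = (\<Sum>k<n. wvec n k * x k)"
    by (intro sum.cong refl) (auto simp: wvec_def of_nat_diff)
  finally show ?thesis .
qed

section \<open>Strict convexity\<close>

definition midvec :: "(nat \<Rightarrow> real) \<Rightarrow> (nat \<Rightarrow> real) \<Rightarrow> nat \<Rightarrow> real" where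
  "midvec x y = (\<lambda>k. (x k + y k) / 2)"

lemma midvec_vecs: "x \<in> vecs n \<Longrightarrow> y \<in> vecs n \<Longrightarrow> midvec x y \<in> vecs n"
  by (simp add: vecs_def midvec_def)

lemma midvec_Dcone: "x \<in> Dcone n \<Longrightarrow> y \<in> Dcone n \<Longrightarrow> midvec x y \<in> Dcone n"
  by (auto simp: Dcone_def vecs_def midvec_def intro: add_mono divide_right_mono)

lemma sqdist_midvec:
  "sqdist n (midvec x y) c = (sqdist n x c + sqdist n y c) / 2 - sqdist n x y / 4"
proof -
  have "sqdist n (midvec x y) c = (\<Sum>k<n. ((x k - c k)^2 + (y k - c k)^2) / 2 - (x k - y k)^2 / 4)"
    unfolding sqdist_def midvec_def by (intro sum.cong refl) (simp add: power2_eq_square field_simps)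
  then show ?thesis
    unfolding sqdist_def by (simp add: sum_subtractf sum_divide_distrib[symmetric] sum.distrib)
qed

lemma sqdist_nonneg: "0 \<le> sqdist n x y"
  by (simp add: sqdist_def sum_nonneg)

lemma eq_if_sqdist_le_0:
  assumes "x \<in> vecs n" "y \<in> vecs n" "sqdist n x y \<le> 0"
  shows "x = y"
proof
  fix k
  have "(\<Sum>k<n. (x k - y k)^2) = 0"
    using assms(3) sqdist_nonneg[of n x y] unfolding sqdist_def by linarith
  then have "\<forall>k\<in>{..<n}. (x k - y k)^2 = 0"
    by (subst (asm) sum_nonneg_eq_0_iff) auto
  then show "x k = y k"
    using assms(1,2) unfolding vecs_def by (cases "k < n") auto
qed

lemma pairwise_abs_diff_midvec_le:
  "pairwise_abs_diff n (midvec x y) \<le> (pairwise_abs_diff n x + pairwise_abs_diff n y) / 2"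
proof -
  have "\<bar>(x i + y i) / 2 - (x j + y j) / 2\<bar> \<le> (\<bar>x i - x j\<bar> + \<bar>y i - y j\<bar>) / 2" for i j
    by argo
  then have "pairwise_abs_diff n (midvec x y)
             \<le> (\<Sum>i<n. \<Sum>j\<in>{i<..<n}. (\<bar>x i - x j\<bar> + \<bar>y i - y j\<bar>) / 2)"
    unfolding pairwise_abs_diff_def midvec_def by (intro sum_mono)
  then show ?thesis
    unfolding pairwise_abs_diff_def by (simp add: sum_divide_distrib[symmetric] sum.distrib)
qed

lemma flobj_midvec_le:
  assumes "\<rho> \<ge> 0"
  shows "flobj n \<rho> y (midvec x x') \<le> (flobj n \<rho> y x + flobj n \<rho> y x') / 2 - sqdist n x x' / 8"
proof -
  have "\<rho> * pairwise_abs_diff n (midvec x x')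
        \<le> (\<rho> * pairwise_abs_diff n x + \<rho> * pairwise_abs_diff n x') / 2"
    using mult_left_mono[OF pairwise_abs_diff_midvec_le assms] by (simp add: algebra_simps)
  then show ?thesis
    using sqdist_midvec[of n x x' y] unfolding flobj_eq by argo
qed

lemma S_set_subsingleton:
  assumes "\<rho> \<ge> 0" "x \<in> S_set n \<rho> y" "x' \<in> S_set n \<rho> y"
  shows "x = x'"
proof (rule eq_if_sqdist_le_0)
  show x: "x \<in> vecs n" and x': "x' \<in> vecs n"
    using assms(2,3) by (auto simp: S_set_def)
  have "flobj n \<rho> y x \<le> flobj n \<rho> y (midvec x x')" "flobj n \<rho> y x' \<le> flobj n \<rho> y x"
    "flobj n \<rho> y x \<le> flobj n \<rho> y x'"
    using assms(2,3) midvec_vecs[OF x x'] x x' by (auto simp: S_set_def)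
  then show "sqdist n x x' \<le> 0"
    using flobj_midvec_le[OF assms(1), of n y x x'] by argo
qed

section \<open>Nearest points\<close>

lemma sqdist_coordinate_le: "k < n \<Longrightarrow> (x k - y k)^2 \<le> sqdist n x y"
  unfolding sqdist_def by (rule member_le_sum) auto

lemma continuous_on_coordinate: "continuous_on S (\<lambda>x::nat \<Rightarrow> real. x i)"
  by (rule continuous_on_subset[OF continuous_on_product_coordinates]) auto

lemma continuous_on_sqdist: "continuous_on S (\<lambda>x. sqdist n x c)"
  unfolding sqdist_def by (intro continuous_intros continuous_on_coordinate)

lemma compact_sqdist_box:
  "compact (Pi UNIV (\<lambda>i. if i < n then {c i - M .. c i + M} else {0 :: real}))"
proof -
  have "compactin (product_topology (\<lambda>i. euclidean) UNIV)
          (PiE UNIV (\<lambda>i. if i < n then {c i - M .. c i + M} else {0 :: real}))"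
    unfolding compactin_PiE by auto
  then show ?thesis
    unfolding PiE_UNIV_domain euclidean_product_topology by simp
qed

lemma sqdist_sublevel_in_box:
  assumes "u \<in> vecs n" "sqdist n u c \<le> S"
  shows "u \<in> Pi UNIV (\<lambda>i. if i < n then {c i - sqrt S .. c i + sqrt S} else {0})"
proof -
  have "\<bar>u i - c i\<bar> \<le> sqrt S" if "i < n" for i
    using real_sqrt_le_mono[OF order.trans[OF sqdist_coordinate_le[OF that] assms(2)]]
    by simp
  then show ?thesis
    using assms(1) by (auto simp: vecs_def abs_le_iff algebra_simps)
qed

lemma nearest_point_exists_unique:
  assumes "closed C" "C \<subseteq> vecs n" "a \<in> C" "\<And>x y. x \<in> C \<Longrightarrow> y \<in> C \<Longrightarrow> midvec x y \<in> C"
  shows "\<exists>!p. p \<in> C \<and> (\<forall>u\<in>C. sqdist n p c \<le> sqdist n u c)"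
proof -
  define S where "S = sqdist n a c"
  define B where "B = Pi UNIV (\<lambda>i. if i < n then {c i - sqrt S .. c i + sqrt S} else {0})"
  have sublevel: "u \<in> B" if "u \<in> C" "sqdist n u c \<le> S" for u
    unfolding B_def using sqdist_sublevel_in_box that assms(2) by blast
  have "compact (C \<inter> B)"
    unfolding B_def using closed_Int_compact[OF assms(1) compact_sqdist_box] .
  moreover have "a \<in> C \<inter> B"
    using sublevel assms(3) S_def by simp
  ultimately obtain p where p: "p \<in> C \<inter> B" and pmin: "\<forall>u\<in>C \<inter> B. sqdist n p c \<le> sqdist n u c"
    using continuous_attains_inf[OF _ _ continuous_on_sqdist] by blast
  have pS: "sqdist n p c \<le> S"
    using pmin \<open>a \<in> C \<inter> B\<close> unfolding S_def by blast
  have "sqdist n p c \<le> sqdist n u c" if "u \<in> C" for u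
  proof (cases "sqdist n u c \<le> S")
    case True
    then show ?thesis using pmin sublevel that by blast
  next
    case False
    then show ?thesis using pS by linarith
  qed
  moreover have "q = p" if "q \<in> C" "\<forall>u\<in>C. sqdist n q c \<le> sqdist n u c" for q
  proof (rule eq_if_sqdist_le_0)
    show "q \<in> vecs n" "p \<in> vecs n"
      using that(1) p assms(2) by auto
    have "sqdist n q c \<le> sqdist n (midvec q p) c" "sqdist n p c \<le> sqdist n q c"
      "sqdist n q c \<le> sqdist n p c"
      using that p assms(4) \<open>\<And>u. u \<in> C \<Longrightarrow> sqdist n p c \<le> sqdist n u c\<close> by auto
    then show "sqdist n q p \<le> 0"
      using sqdist_midvec[of n q p c] by argo
  qed
  ultimately show ?thesis
    using p by blast
qed

lemma closed_Dcone: "closed (Dcone n)"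
proof -
  have "Dcone n = {x. \<forall>i. (n \<le> i \<longrightarrow> x i = 0) \<and> (\<forall>j. i \<le> j \<longrightarrow> j < n \<longrightarrow> x j \<le> x i)}"
    unfolding Dcone_def vecs_def by auto
  also have "closed \<dots>"
    by (intro closed_Collect_all closed_Collect_conj closed_Collect_imp open_Collect_const
         closed_Collect_eq closed_Collect_le continuous_on_coordinate continuous_on_const)
  finally show ?thesis .
qed

lemma projD_nearest:
  "projD n c \<in> Dcone n \<and> (\<forall>u\<in>Dcone n. sqdist n (projD n c) c \<le> sqdist n u c)"
proof -
  have "(\<lambda>_. 0) \<in> Dcone n"
    by (simp add: Dcone_def vecs_def)
  then have "\<exists>!p. p \<in> Dcone n \<and> (\<forall>u\<in>Dcone n. sqdist n p c \<le> sqdist n u c)"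
    by (intro nearest_point_exists_unique closed_Dcone midvec_Dcone) (auto simp: Dcone_def)
  then show ?thesis
    unfolding projD_def by (rule theI')
qed

section \<open>Permutations of coordinates\<close>

lemma vecs_permute: "\<sigma> permutes {..<n} \<Longrightarrow> x \<in> vecs n \<Longrightarrow> x \<circ> \<sigma> \<in> vecs n"
  by (simp add: vecs_def permutes_not_in)

lemma sqdist_permute:
  "\<sigma> permutes {..<n} \<Longrightarrow> sqdist n (x \<circ> \<sigma>) (y \<circ> \<sigma>) = sqdist n x y"
  unfolding sqdist_def using sum.permute[of \<sigma> "{..<n}" "\<lambda>i. (x i - y i)^2"] by (simp add: comp_def)

lemma flobj_permute:
  "\<sigma> permutes {..<n} \<Longrightarrow> flobj n \<rho> (y \<circ> \<sigma>) (x \<circ> \<sigma>) = flobj n \<rho> y x"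
  by (simp add: flobj_eq sqdist_permute pairwise_abs_diff_permute)

lemma S_set_permute_subset:
  assumes \<sigma>: "\<sigma> permutes {..<n}" and x: "x \<in> S_set n \<rho> y"
  shows "x \<circ> \<sigma> \<in> S_set n \<rho> (y \<circ> \<sigma>)"
proof -
  have "flobj n \<rho> (y \<circ> \<sigma>) (x \<circ> \<sigma>) \<le> flobj n \<rho> (y \<circ> \<sigma>) u" if u: "u \<in> vecs n" for u
  proof -
    have "u \<circ> inv \<sigma> \<in> vecs n"
      using vecs_permute[OF permutes_inv[OF \<sigma>] u] .
    then have "flobj n \<rho> y x \<le> flobj n \<rho> y (u \<circ> inv \<sigma>)"
      using x unfolding S_set_def by blast
    also have "\<dots> = flobj n \<rho> (y \<circ> \<sigma>) (u \<circ> inv \<sigma> \<circ> \<sigma>)"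
      using flobj_permute[OF \<sigma>] by simp
    also have "u \<circ> inv \<sigma> \<circ> \<sigma> = u"
      using permutes_inverses(2)[OF \<sigma>] by (simp add: fun_eq_iff)
    finally show ?thesis
      by (simp only: flobj_permute[OF \<sigma>])
  qed
  then show ?thesis
    using x vecs_permute[OF \<sigma>] unfolding S_set_def by auto
qed

lemma S_set_permute:
  assumes \<sigma>: "\<sigma> permutes {..<n}"
  shows "S_set n \<rho> (y \<circ> \<sigma>) = (\<lambda>x. x \<circ> \<sigma>) ` S_set n \<rho> y"
proof
  show "(\<lambda>x. x \<circ> \<sigma>) ` S_set n \<rho> y \<subseteq> S_set n \<rho> (y \<circ> \<sigma>)"
    using S_set_permute_subset[OF \<sigma>] by blast
next
  have inv: "z \<circ> \<sigma> \<circ> inv \<sigma> = z" "z \<circ> inv \<sigma> \<circ> \<sigma> = z" for z :: "nat \<Rightarrow> real"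
    using permutes_inverses[OF \<sigma>] by (simp_all add: fun_eq_iff)
  show "S_set n \<rho> (y \<circ> \<sigma>) \<subseteq> (\<lambda>x. x \<circ> \<sigma>) ` S_set n \<rho> y"
  proof
    fix x assume "x \<in> S_set n \<rho> (y \<circ> \<sigma>)"
    then have "x \<circ> inv \<sigma> \<in> S_set n \<rho> y"
      using S_set_permute_subset[OF permutes_inv[OF \<sigma>], of x \<rho> "y \<circ> \<sigma>"] by (simp only: inv(1))
    then show "x \<in> (\<lambda>x. x \<circ> \<sigma>) ` S_set n \<rho> y"
      using inv(2)[of x] by (simp add: image_iff) metis
  qed
qed

lemma perm_matrix_transp: "is_perm_matrix n P \<Longrightarrow> is_perm_matrix n (transp_mat P)"
  by (auto simp: is_perm_matrix_def transp_mat_def)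

lemma perm_matrix_ex_permutes:
  assumes P: "is_perm_matrix n P"
  obtains \<sigma> where "\<sigma> permutes {..<n}" "\<And>i. i < n \<Longrightarrow> P i (\<sigma> i) = 1"
proof -
  define \<sigma> where "\<sigma> i = (if i < n then (THE j. j < n \<and> P i j = 1) else i)" for i
  have row: "\<sigma> i < n \<and> P i (\<sigma> i) = 1" if "i < n" for i
    using theI'[of "\<lambda>j. j < n \<and> P i j = 1"] P that unfolding is_perm_matrix_def \<sigma>_def by auto
  have col: "\<exists>!i. i < n \<and> P i j = 1" if "j < n" for j
    using P that unfolding is_perm_matrix_def by blast
  have "inj_on \<sigma> {..<n}"
  proof (rule inj_onI)
    fix i i' assume "i \<in> {..<n}" "i' \<in> {..<n}" "\<sigma> i = \<sigma> i'"
    then have "i < n" "i' < n" "P i (\<sigma> i) = 1" "P i' (\<sigma> i) = 1" "\<sigma> i < n"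
      using row[of i] row[of i'] by auto
    then show "i = i'"
      using col[of "\<sigma> i"] by blast
  qed
  then have "\<sigma> permutes {..<n}"
    by (rule inj_imp_permutes) (auto simp: row, simp add: \<sigma>_def)
  then show ?thesis
    using that row by blast
qed

lemma mv_perm_matrix:
  assumes P: "is_perm_matrix n P" and \<sigma>: "\<sigma> permutes {..<n}" "\<And>i. i < n \<Longrightarrow> P i (\<sigma> i) = 1"
    and x: "x \<in> vecs n"
  shows "mv n P x = x \<circ> \<sigma>"
proof
  fix i
  show "mv n P x i = (x \<circ> \<sigma>) i"
  proof (cases "i < n")
    case True
    have "P i j = (if j = \<sigma> i then 1 else 0)" if "j < n" for j
      using P \<sigma> True that permutes_in_image[OF \<sigma>(1)] unfolding is_perm_matrix_def by (metis lessThan_iff)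
    then have "(\<Sum>j<n. P i j * x j) = (\<Sum>j<n. if j = \<sigma> i then x j else 0)"
      by (intro sum.cong) auto
    then show ?thesis
      using True permutes_in_image[OF \<sigma>(1)] by (simp add: mv_def)
  next
    case False
    then show ?thesis
      using x permutes_not_in[OF \<sigma>(1)] by (simp add: mv_def vecs_def)
  qed
qed

lemma mv_transp_perm_matrix:
  assumes P: "is_perm_matrix n P" and \<sigma>: "\<sigma> permutes {..<n}" "\<And>i. i < n \<Longrightarrow> P i (\<sigma> i) = 1"
    and x: "x \<in> vecs n"
  shows "mv n (transp_mat P) x = x \<circ> inv \<sigma>"
proof (rule mv_perm_matrix[OF perm_matrix_transp[OF P] permutes_inv[OF \<sigma>(1)] _ x])
  fix i assume "i < n"
  then show "transp_mat P i (inv \<sigma> i) = 1"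
    using \<sigma>(2)[of "inv \<sigma> i"] permutes_inverses(1)[OF \<sigma>(1)]
      permutes_in_image[OF permutes_inv[OF \<sigma>(1)]]
    by (simp add: transp_mat_def)
qed

lemma sum_transpose:
  fixes f :: "nat \<Rightarrow> 'a \<Rightarrow> real"
  assumes "i < n" "j < n" "i \<noteq> j"
  shows "(\<Sum>k<n. f k (v (Transposition.transpose i j k)))
         = (\<Sum>k<n. f k (v k)) - f i (v i) - f j (v j) + f i (v j) + f j (v i)"
proof -
  have split: "(\<Sum>k<n. g k) = g i + g j + (\<Sum>k\<in>{..<n} - {i, j}. g k)" for g :: "nat \<Rightarrow> real"
    using assms sum.remove[of "{..<n}" i g] sum.remove[of "{..<n} - {i}" j g]
    by (simp add: Diff_insert2[symmetric] insert_commute)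
  have "(\<Sum>k\<in>{..<n} - {i, j}. f k (v (Transposition.transpose i j k)))
        = (\<Sum>k\<in>{..<n} - {i, j}. f k (v k))"
    by (intro sum.cong) auto
  then show ?thesis
    using split[of "\<lambda>k. f k (v (Transposition.transpose i j k))"] split[of "\<lambda>k. f k (v k)"]
    by (simp add: assms(3))
qed

lemma antitone_if_adjacent:
  fixes v :: "nat \<Rightarrow> 'a::preorder"
  assumes "\<And>i. Suc i < n \<Longrightarrow> v (Suc i) \<le> v i" "i \<le> j" "j < n"
  shows "v j \<le> v i"
  using assms(2,3)
proof (induction j rule: dec_induct)
  case base
  then show ?case by simp
next
  case (step k)
  then show ?case
    using assms(1)[of k] order_trans by auto
qed

text \<open>A rearrangement of \<open>u\<close> closest to the antitone \<open>z\<close> is chosen, and among those one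
  minimising \<open>\<Sum> k * u (\<sigma> k)\<close>: an adjacent ascent could then be swapped without increasing the
  distance while strictly decreasing the potential.\<close>
lemma exists_antitone_rearrangement:
  assumes u: "u \<in> vecs n" and z: "\<forall>i j. i \<le> j \<longrightarrow> j < n \<longrightarrow> z j \<le> z i"
  obtains \<sigma> where "\<sigma> permutes {..<n}" "u \<circ> \<sigma> \<in> Dcone n" "sqdist n (u \<circ> \<sigma>) z \<le> sqdist n u z"
proof -
  define perms where "perms = {\<sigma>. \<sigma> permutes {..<n}}"
  have fin: "finite perms" and id: "id \<in> perms"
    unfolding perms_def by (auto simp: finite_permutations permutes_id)
  obtain \<sigma>\<^sub>0 where \<sigma>\<^sub>0: "is_arg_min (\<lambda>\<sigma>. sqdist n (u \<circ> \<sigma>) z) (\<lambda>\<sigma>. \<sigma> \<in> perms) \<sigma>\<^sub>0"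
    using ex_is_arg_min_if_finite[OF fin] id by blast
  define M where "M = {\<sigma> \<in> perms. sqdist n (u \<circ> \<sigma>) z \<le> sqdist n (u \<circ> \<sigma>\<^sub>0) z}"
  have "finite M" "\<sigma>\<^sub>0 \<in> M"
    using fin \<sigma>\<^sub>0 unfolding M_def is_arg_min_def by auto
  then obtain \<sigma> where \<sigma>: "is_arg_min (\<lambda>\<sigma>. \<Sum>k<n. real k * u (\<sigma> k)) (\<lambda>\<sigma>. \<sigma> \<in> M) \<sigma>"
    using ex_is_arg_min_if_finite by blast
  then have \<sigma>_perm: "\<sigma> \<in> perms" and \<sigma>M: "\<sigma> \<in> M"
    unfolding M_def is_arg_min_def by auto
  have adjacent: "u (\<sigma> (Suc i)) \<le> u (\<sigma> i)" if i: "Suc i < n" for i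
  proof (rule ccontr)
    assume ascent: "\<not> u (\<sigma> (Suc i)) \<le> u (\<sigma> i)"
    define \<tau> where "\<tau> = \<sigma> \<circ> Transposition.transpose i (Suc i)"
    have "\<tau> \<in> perms"
      using \<sigma>_perm i unfolding perms_def \<tau>_def by (intro CollectI permutes_compose permutes_swap_id) auto
    have "sqdist n (u \<circ> \<tau>) z
          = sqdist n (u \<circ> \<sigma>) z - 2 * ((u (\<sigma> (Suc i)) - u (\<sigma> i)) * (z i - z (Suc i)))"
      unfolding sqdist_def \<tau>_def
      using sum_transpose[of i n "Suc i" "\<lambda>k a. (a - z k)^2" "u \<circ> \<sigma>"] i
      by (simp add: power2_eq_square algebra_simps)
    moreover have "0 \<le> (u (\<sigma> (Suc i)) - u (\<sigma> i)) * (z i - z (Suc i))"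
      using z i ascent by simp
    ultimately have "\<tau> \<in> M"
      using \<open>\<tau> \<in> perms\<close> \<sigma>M unfolding M_def by simp
    moreover have "(\<Sum>k<n. real k * u (\<tau> k)) = (\<Sum>k<n. real k * u (\<sigma> k)) - (u (\<sigma> (Suc i)) - u (\<sigma> i))"
      unfolding \<tau>_def
      using sum_transpose[of i n "Suc i" "\<lambda>k a. real k * a" "u \<circ> \<sigma>"] i
      by (simp add: algebra_simps)
    ultimately show False
      using \<sigma> ascent unfolding is_arg_min_def by force
  qed
  have "u \<circ> \<sigma> \<in> Dcone n"
    using vecs_permute[OF _ u] \<sigma>_perm antitone_if_adjacent[of n "u \<circ> \<sigma>"] adjacent
    unfolding Dcone_def perms_def by auto
  moreover have "sqdist n (u \<circ> \<sigma>) z \<le> sqdist n u z"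
    using \<sigma>M \<sigma>\<^sub>0 id unfolding M_def is_arg_min_linorder by auto
  ultimately show ?thesis
    using that \<sigma>_perm unfolding perms_def by blast
qed

lemma flobj_antitone:
  assumes "\<forall>i j. i \<le> j \<longrightarrow> j < n \<longrightarrow> x j \<le> x i"
  shows "flobj n \<rho> z x = 1/2 * sqdist n x (\<lambda>k. z k - \<rho> * wvec n k)
           + (\<rho> * (\<Sum>k<n. wvec n k * z k) - \<rho>^2/2 * (\<Sum>k<n. (wvec n k)^2))"
proof -
  have "flobj n \<rho> z x = (\<Sum>k<n. 1/2 * (x k - z k)^2 + \<rho> * (wvec n k * x k))"
    unfolding flobj_eq pairwise_abs_diff_antitone[OF assms] sqdist_def
    by (simp add: sum.distrib sum_distrib_left)
  also have "\<dots> = (\<Sum>k<n. 1/2 * (x k - (z k - \<rho> * wvec n k))^2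
                       + (\<rho> * (wvec n k * z k) - \<rho>^2/2 * (wvec n k)^2))"
    by (intro sum.cong refl) (simp add: power2_eq_square algebra_simps)
  finally show ?thesis
    unfolding sqdist_def by (simp add: sum.distrib sum_distrib_left sum_subtractf)
qed

lemma S_set_antitone:
  assumes "\<rho> \<ge> 0" and z: "\<forall>i j. i \<le> j \<longrightarrow> j < n \<longrightarrow> z j \<le> z i"
  shows "S_set n \<rho> z = {projD n (\<lambda>k. z k - \<rho> * wvec n k)}"
proof -
  define c where "c = (\<lambda>k. z k - \<rho> * wvec n k)"
  define p where "p = projD n c"
  have pD: "p \<in> Dcone n" and pmin: "\<And>u. u \<in> Dcone n \<Longrightarrow> sqdist n p c \<le> sqdist n u c"
    using projD_nearest[of n c] unfolding p_def by auto
  have "flobj n \<rho> z p \<le> flobj n \<rho> z u" if u: "u \<in> vecs n" for u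
  proof -
    obtain \<sigma> where \<sigma>: "\<sigma> permutes {..<n}" and v: "u \<circ> \<sigma> \<in> Dcone n"
      and dist: "sqdist n (u \<circ> \<sigma>) z \<le> sqdist n u z"
      using exists_antitone_rearrangement[OF u z] by blast
    have "flobj n \<rho> z p \<le> flobj n \<rho> z (u \<circ> \<sigma>)"
      using pmin[OF v] pD v flobj_antitone[of n _ \<rho> z] unfolding Dcone_def c_def by auto
    also have "\<dots> \<le> flobj n \<rho> z u"
      using dist unfolding flobj_eq pairwise_abs_diff_permute[OF \<sigma>] by simp
    finally show ?thesis .
  qed
  then have "p \<in> S_set n \<rho> z"
    using pD unfolding S_set_def Dcone_def by auto
  then show ?thesis
    using S_set_subsingleton[OF assms(1)] unfolding p_def c_def by blast
qed

theorem mainTheorem3: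
  fixes n :: nat and \<rho> :: real and y :: "nat \<Rightarrow> real" and P :: "nat \<Rightarrow> nat \<Rightarrow> real"
  assumes "\<rho> > 0"
    and "y \<in> vecs n"
    and "is_perm_matrix n P"
    and "\<forall>i j. i \<le> j \<longrightarrow> j < n \<longrightarrow> mv n P y j \<le> mv n P y i"
  shows "S_set n \<rho> y =
           {mv n (transp_mat P) (projD n (\<lambda>k. mv n P y k - \<rho> * wvec n k))}"
proof -
  obtain \<sigma> where \<sigma>: "\<sigma> permutes {..<n}" "\<And>i. i < n \<Longrightarrow> P i (\<sigma> i) = 1"
    using perm_matrix_ex_permutes[OF assms(3)] by blast
  define p where "p = projD n (\<lambda>k. mv n P y k - \<rho> * wvec n k)"
  have Py: "mv n P y = y \<circ> \<sigma>"
    using mv_perm_matrix[OF assms(3) \<sigma> assms(2)] .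
  have "S_set n \<rho> (y \<circ> \<sigma>) = {p}"
    using S_set_antitone[of \<rho> n "mv n P y"] assms(1,4) unfolding p_def Py by simp
  then have "S_set n \<rho> (y \<circ> \<sigma> \<circ> inv \<sigma>) = {p \<circ> inv \<sigma>}"
    using S_set_permute[OF permutes_inv[OF \<sigma>(1)]] by simp
  moreover have "y \<circ> \<sigma> \<circ> inv \<sigma> = y"
    using permutes_inverses(1)[OF \<sigma>(1)] by (simp add: fun_eq_iff)
  moreover have "p \<in> vecs n"
    using projD_nearest unfolding p_def Dcone_def by blast
  ultimately show ?thesis
    using mv_transp_perm_matrix[OF assms(3) \<sigma>] unfolding p_def by simp
qed

end
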